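(* Let $F\subseteq S$ be measurable. Then $P_S(F)\le \mathrm{Per}_s(F)$; more precisely, in $[0,+\infty]$, $$\mathrm{Per}_s(F)=P_S(F)+\sum_{k\in\mathbb Z\setminus\{0\}}\int_F\int_F\frac{dx\,dy}{|x-y+ke_1|^{n+s}}.$$ Moreover, setting $\widetilde F:=F\cap\{x_1\in[1/4,1/2]\}$, $\widehat F:=(F+e_1)\cap\{x_1\in[1/2,3/4]\}$ and $\Pi_S(F):=\int_{\widetilde F}\int_{\widehat F}\frac{dx\,dy}{|x-y|^{n+s}}$, there is a constant $C>0$ depending only on $n$ and $s$ such that $$\mathrm{Per}_s(F)\le P_S(F)+C\big(|F|^2+\Pi_S(F)\big).$$
   Context: Fix $n\ge 2$ and $s\in(0,1)$. Write $x=(x_1,x')\in\mathbb R\times\mathbb R^{n-1}$, $e_1=(1,0,\dots,0)$, and let $S:=[-1/2,1/2]\times\mathbb R^{n-1}$. Define the kernel $K(x):=\sum_{k\in\mathbb Z}|x+ke_1|^{-n-s}$, and for a measurable $E\subseteq\mathbb R^n$ set $P_S(E):=\int_{E\cap S}\int_{S\setminus E}K(x-y)\,dx\,dy$. The fractional perimeter is $\mathrm{Per}_s(F):=\int_F\int_{\mathbb R^n\setminus F}\frac{dx\,dy}{|x-y|^{n+s}}$. For $E\subseteq\mathbb R^n$, $v\in\mathbb R^n$, $E+v:=\{p+v:p\in E\}$. *)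

theory Defs
  imports "HOL-Analysis.Analysis"
begin

text \<open>Points of R^n are written x = (x_1, x') :: real \<times> 'm, so n = DIM(real \<times> 'm) = 1 + DIM('m) \<ge> 2.\<close>

definition e1 :: "real \<times> 'm::euclidean_space" where
  "e1 = (1, 0)"

definition strip :: "(real \<times> 'm::euclidean_space) set" where
  "strip = {x. fst x \<in> {-1/2..1/2}}"

definition rkern :: "real \<Rightarrow> real \<times> 'm::euclidean_space \<Rightarrow> ennreal" where
  "rkern s z = ennreal (norm z powr (- (real DIM(real \<times> 'm) + s)))"

definition perK :: "real \<Rightarrow> real \<times> 'm::euclidean_space \<Rightarrow> ennreal" where
  "perK s z = (\<Sum>\<^sub>\<infinity>k\<in>(UNIV::int set). rkern s (z + of_int k *\<^sub>R e1))"

definition frac_per :: "real \<Rightarrow> (real \<times> 'm::euclidean_space) set \<Rightarrow> ennreal" where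
  "frac_per s F = (\<integral>\<^sup>+ y. \<integral>\<^sup>+ x. indicator F y * indicator (- F) x * rkern s (x - y) \<partial>lebesgue \<partial>lebesgue)"

definition P_S :: "real \<Rightarrow> (real \<times> 'm::euclidean_space) set \<Rightarrow> ennreal" where
  "P_S s E = (\<integral>\<^sup>+ y. \<integral>\<^sup>+ x. indicator (E \<inter> strip) y * indicator (strip - E) x * perK s (x - y)
      \<partial>lebesgue \<partial>lebesgue)"

definition Pi_S :: "real \<Rightarrow> (real \<times> 'm::euclidean_space) set \<Rightarrow> ennreal" where
  "Pi_S s F = (let Ft = F \<inter> {x. fst x \<in> {1/4..1/2}};
                   Fh = ((\<lambda>p. p + e1) ` F) \<inter> {x. fst x \<in> {1/2..3/4}}
               in \<integral>\<^sup>+ y. \<integral>\<^sup>+ x. indicator Ft y * indicator Fh x * rkern s (x - y) \<partial>lebesgue \<partial>lebesgue)"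

end

theory Submission
  imports Defs
begin

text \<open>The translates \<open>S + k e\<^sub>1\<close> of the strip tile \<open>\<real>\<^sup>n\<close> up to a null set. Splitting the complement
  of \<open>F\<close> accordingly and moving each piece back into \<open>S\<close> by translation, the interaction of \<open>F\<close>
  with \<open>S + k e\<^sub>1\<close> becomes the interaction of \<open>F\<close> with \<open>S - F\<close> and with \<open>F\<close> through the
  kernel shifted by \<open>k e\<^sub>1\<close>; summing over \<open>k\<close> gives \<open>P\<^sub>S(F)\<close> plus the self-interactions
  of \<open>F\<close> with its translates \<open>F + k e\<^sub>1\<close>, \<open>k \<noteq> 0\<close>.

  For \<open>|k| \<ge> 2\<close> the sets \<open>F\<close> and \<open>F + k e\<^sub>1\<close> are at distance at least \<open>|k| - 1\<close>, so these terms
  are bounded by \<open>(|k| - 1)\<^sup>-\<^sup>n\<^sup>-\<^sup>s |F|\<^sup>2\<close>, which is summable. For \<open>k = \<plusminus>1\<close> (equal by symmetry),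
  points closer than \<open>1/4\<close> only arise between \<open>F \<inter> {x\<^sub>1 \<ge> 1/4}\<close> and
  \<open>F \<inter> {x\<^sub>1 \<le> -1/4}\<close>, whose interaction is \<open>\<Pi>\<^sub>S(F)\<close>; the rest is at most \<open>4\<^sup>n\<^sup>+\<^sup>s |F|\<^sup>2\<close>.\<close>

lemma infsum_nat_ennreal_eq_suminf: "(\<Sum>\<^sub>\<infinity>n\<in>UNIV. f n) = (\<Sum>n. f n :: ennreal)"
proof -
  have "(f has_sum (\<Sum>\<^sub>\<infinity>n\<in>UNIV. f n)) UNIV"
    by (intro has_sum_infsum nonneg_summable_on_complete) simp
  then show ?thesis by (metis has_sum_imp_sums sums_unique)
qed

lemma infsum_countable_ennreal_eq_suminf:
  fixes f :: "'i::countable \<Rightarrow> ennreal"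
  shows "(\<Sum>\<^sub>\<infinity>i\<in>I. f i) = (\<Sum>n. if n \<in> to_nat ` I then f (from_nat n) else 0)"
proof -
  have "(\<Sum>\<^sub>\<infinity>i\<in>I. f i) = (\<Sum>\<^sub>\<infinity>n\<in>to_nat ` I. f (from_nat n))"
    by (subst infsum_reindex) (auto simp: comp_def inj_on_def)
  also have "\<dots> = (\<Sum>\<^sub>\<infinity>n\<in>UNIV. if n \<in> to_nat ` I then f (from_nat n) else 0)"
    by (rule infsum_cong_neutral) auto
  finally show ?thesis by (simp add: infsum_nat_ennreal_eq_suminf)
qed

lemma infsum_cmult_ennreal:
  fixes f :: "'i::countable \<Rightarrow> ennreal"
  shows "(\<Sum>\<^sub>\<infinity>i\<in>I. c * f i) = c * (\<Sum>\<^sub>\<infinity>i\<in>I. f i)"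
  by (simp add: infsum_countable_ennreal_eq_suminf ennreal_suminf_cmult[symmetric]
      if_distrib[of "(*) c"] cong: if_cong)

lemma nn_integral_infsum:
  fixes g :: "'i::countable \<Rightarrow> 'a \<Rightarrow> ennreal"
  assumes "\<And>i. i \<in> I \<Longrightarrow> g i \<in> borel_measurable M"
  shows "(\<integral>\<^sup>+x. (\<Sum>\<^sub>\<infinity>i\<in>I. g i x) \<partial>M) = (\<Sum>\<^sub>\<infinity>i\<in>I. \<integral>\<^sup>+x. g i x \<partial>M)"
proof -
  have "(\<integral>\<^sup>+x. (\<Sum>n. if n \<in> to_nat ` I then g (from_nat n) x else 0) \<partial>M)
      = (\<Sum>n. \<integral>\<^sup>+x. (if n \<in> to_nat ` I then g (from_nat n) x else 0) \<partial>M)"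
  proof (rule nn_integral_suminf)
    show "(\<lambda>x. if n \<in> to_nat ` I then g (from_nat n) x else 0) \<in> borel_measurable M" for n
      using assms by (cases "n \<in> to_nat ` I") auto
  qed
  also have "\<dots> = (\<Sum>n. if n \<in> to_nat ` I then \<integral>\<^sup>+x. g (from_nat n) x \<partial>M else 0)"
    by (intro suminf_cong) simp
  finally show ?thesis
    by (simp add: infsum_countable_ennreal_eq_suminf)
qed

lemma infsum_int_nonzero_symmetric:
  fixes f :: "int \<Rightarrow> ennreal"
  assumes "\<And>k. f (- k) = f k"
  shows "(\<Sum>\<^sub>\<infinity>k\<in>UNIV - {0}. f k) = 2 * (\<Sum>n. f (int (Suc n)))"
proof -
  let ?pos = "range (\<lambda>n. int (Suc n))"
  have "UNIV - {0} = ?pos \<union> uminus ` ?pos"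
    by (auto simp: image_iff) presburger
  then have "(\<Sum>\<^sub>\<infinity>k\<in>UNIV - {0}. f k) = (\<Sum>\<^sub>\<infinity>k\<in>?pos. f k) + (\<Sum>\<^sub>\<infinity>k\<in>uminus ` ?pos. f k)"
    by (simp only:) (rule infsum_Un_disjoint; auto intro: nonneg_summable_on_complete)
  also have "(\<Sum>\<^sub>\<infinity>k\<in>uminus ` ?pos. f k) = (\<Sum>\<^sub>\<infinity>k\<in>?pos. f k)"
    by (subst infsum_reindex) (auto simp: comp_def assms)
  also have "(\<Sum>\<^sub>\<infinity>k\<in>?pos. f k) = (\<Sum>n. f (int (Suc n)))"
    by (subst infsum_reindex) (auto simp: comp_def inj_def infsum_nat_ennreal_eq_suminf)
  finally show ?thesis by (simp add: mult_2)
qed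

lemma sigma_finite_lebesgue: "sigma_finite_measure (lebesgue :: 'a::euclidean_space measure)"
proof
  show "\<exists>A::'a set set. countable A \<and> A \<subseteq> sets lebesgue \<and> \<Union>A = space lebesgue \<and>
      (\<forall>a\<in>A. emeasure lebesgue a \<noteq> \<infinity>)"
    by (intro exI[of _ "range (\<lambda>n::nat. box (- real n *\<^sub>R One) (real n *\<^sub>R One))"])
       (auto simp: emeasure_lborel_box_eq UN_box_eq_UNIV)
qed

interpretation lebesgue: sigma_finite_measure "lebesgue :: 'a::euclidean_space measure"
  by (rule sigma_finite_lebesgue)

lemma lebesgue_measurable_ident[measurable]:
  "(\<lambda>x. x) \<in> lebesgue \<rightarrow>\<^sub>M (borel :: 'a::euclidean_space measure)"
  by (rule measurable_completion) simp

lemma sets_lebesgue_translate: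
  fixes B :: "'a::euclidean_space set"
  assumes "B \<in> sets lebesgue"
  shows "(\<lambda>x. x + w) ` B \<in> sets lebesgue"
  using lebesgue_sets_translation[OF assms, of w] by (simp add: add.commute)

lemma nn_integral_lebesgue_translate:
  fixes f :: "'a::euclidean_space \<Rightarrow> ennreal"
  assumes f: "f \<in> borel_measurable lebesgue"
  shows "(\<integral>\<^sup>+x. f (x + w) \<partial>lebesgue) = (\<integral>\<^sup>+x. f x \<partial>lebesgue)"
proof -
  have shift: "(\<lambda>x. w + (\<Sum>j\<in>Basis. (1 * (x \<bullet> j)) *\<^sub>R j)) = (\<lambda>x. w + x)"
    by (simp add: euclidean_representation)
  have "(\<integral>\<^sup>+x. f x \<partial>lebesgue) = (\<integral>\<^sup>+x. f x \<partial>distr lebesgue lebesgue (\<lambda>x. w + x))"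
    using lebesgue_affine_euclidean[of "\<lambda>_. 1" w] unfolding shift by (simp add: density_1)
  also have "\<dots> = (\<integral>\<^sup>+x. f (w + x) \<partial>lebesgue)"
    using lebesgue_affine_measurable[of "\<lambda>_. 1" w] f unfolding shift
    by (subst nn_integral_distr) auto
  finally show ?thesis by (simp add: add.commute)
qed

lemma measurable_rkern[measurable]: "rkern s \<in> borel_measurable borel"
  unfolding rkern_def by measurable

lemma rkern_minus: "rkern s (- z) = rkern s z"
  by (simp add: rkern_def)

lemma rkern_le_powr_fst:
  fixes z :: "real \<times> 'm::euclidean_space"
  assumes "0 \<le> s" "0 < d" "d \<le> \<bar>fst z\<bar>"
  shows "rkern s z \<le> ennreal (d powr - (real DIM(real \<times> 'm) + s))"
proof -
  have "\<bar>fst z\<bar> \<le> norm z"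
    by (metis norm_fst_le prod.collapse real_norm_def)
  then show ?thesis
    unfolding rkern_def by (intro ennreal_leI powr_mono2') (use assms in auto)
qed

definition interaction ::
    "real \<Rightarrow> (real \<times> 'm::euclidean_space) set \<Rightarrow> (real \<times> 'm) set \<Rightarrow> real \<times> 'm \<Rightarrow> ennreal" where
  "interaction s A B w =
     (\<integral>\<^sup>+y. \<integral>\<^sup>+x. indicator A y * indicator B x * rkern s (x - y + w) \<partial>lebesgue \<partial>lebesgue)"

lemma measurable_interaction_inner[measurable]:
  fixes A B :: "(real \<times> 'm::euclidean_space) set"
  assumes [measurable]: "A \<in> sets lebesgue" "B \<in> sets lebesgue"
  shows "(\<lambda>y. \<integral>\<^sup>+x. indicator A y * indicator B x * rkern s (x - y + w) \<partial>lebesgue)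
    \<in> borel_measurable lebesgue"
proof -
  have "(\<lambda>(y, x). indicator A y * indicator B x * rkern s (x - y + w))
      \<in> borel_measurable (lebesgue \<Otimes>\<^sub>M (lebesgue :: (real \<times> 'm) measure))"
    by measurable
  then show ?thesis by (rule lebesgue.borel_measurable_nn_integral[simplified])
qed

lemma frac_per_eq_interaction: "frac_per s F = interaction s F (- F) 0"
  by (simp add: frac_per_def interaction_def)

lemma interaction_Un:
  assumes [measurable]: "A \<in> sets lebesgue" "B \<in> sets lebesgue" "C \<in> sets lebesgue"
    and "B \<inter> C = {}"
  shows "interaction s A (B \<union> C) w = interaction s A B w + interaction s A C w"
proof -
  have "interaction s A (B \<union> C) w = (\<integral>\<^sup>+y. (\<integral>\<^sup>+x. indicator A y * indicator B x * rkern s (x - y + w)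
      + indicator A y * indicator C x * rkern s (x - y + w) \<partial>lebesgue) \<partial>lebesgue)"
    unfolding interaction_def
    by (intro nn_integral_cong) (use assms(4) in \<open>auto simp: indicator_def\<close>)
  also have "\<dots> = interaction s A B w + interaction s A C w"
    unfolding interaction_def
    by (subst nn_integral_add[symmetric]) (measurable, intro nn_integral_cong nn_integral_add, measurable)
  finally show ?thesis .
qed

lemma interaction_swap:
  fixes A B :: "(real \<times> 'm::euclidean_space) set"
  assumes [measurable]: "A \<in> sets lebesgue" "B \<in> sets lebesgue"
  shows "interaction s A B w = interaction s B A (- w)"
proof -
  interpret pair_sigma_finite "lebesgue :: (real \<times> 'm) measure" "lebesgue :: (real \<times> 'm) measure" ..
  have "interaction s A B w
      = (\<integral>\<^sup>+x. \<integral>\<^sup>+y. indicator A y * indicator B x * rkern s (x - y + w) \<partial>lebesgue \<partial>lebesgue)"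
    unfolding interaction_def by (rule Fubini') measurable
  also have "\<dots> = interaction s B A (- w)"
    unfolding interaction_def
    by (intro nn_integral_cong) (metis (no_types) mult.commute minus_diff_eq minus_add_distrib rkern_minus)
  finally show ?thesis .
qed

lemma interaction_Un_left:
  fixes A B C :: "(real \<times> 'm::euclidean_space) set"
  assumes [measurable]: "A \<in> sets lebesgue" "B \<in> sets lebesgue" "C \<in> sets lebesgue"
    and "A \<inter> C = {}"
  shows "interaction s (A \<union> C) B w = interaction s A B w + interaction s C B w"
  using assms(4) by (simp add: interaction_swap[of _ B] interaction_Un)

lemma interaction_translate:
  fixes A B :: "(real \<times> 'm::euclidean_space) set"
  assumes [measurable]: "A \<in> sets lebesgue" "B \<in> sets lebesgue"
  shows "interaction s A B w = interaction s A ((\<lambda>x. x + w) ` B) 0"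
  unfolding interaction_def
proof (rule nn_integral_cong)
  fix y :: "real \<times> 'm"
  have [measurable]: "(\<lambda>x. x + w) ` B \<in> sets lebesgue"
    by (rule sets_lebesgue_translate) simp
  have shifted: "indicator ((\<lambda>x. x + w) ` B) (x + w) = (indicator B x :: ennreal)" for x
    by (simp add: indicator_def image_iff)
  have "(\<integral>\<^sup>+x. indicator A y * indicator B x * rkern s (x - y + w) \<partial>lebesgue)
      = (\<integral>\<^sup>+x. indicator A y * indicator ((\<lambda>x. x + w) ` B) (x + w) * rkern s (x + w - y + 0) \<partial>lebesgue)"
    by (simp add: shifted algebra_simps)
  also have "\<dots> = (\<integral>\<^sup>+x. indicator A y * indicator ((\<lambda>x. x + w) ` B) x * rkern s (x - y + 0) \<partial>lebesgue)"
    by (rule nn_integral_lebesgue_translate) measurable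
  finally show "(\<integral>\<^sup>+x. indicator A y * indicator B x * rkern s (x - y + w) \<partial>lebesgue)
      = (\<integral>\<^sup>+x. indicator A y * indicator ((\<lambda>x. x + w) ` B) x * rkern s (x - y + 0) \<partial>lebesgue)" .
qed

lemma interaction_infsum_AE:
  fixes B :: "(real \<times> 'm::euclidean_space) set" and Bs :: "'i::countable \<Rightarrow> (real \<times> 'm) set"
  assumes [measurable]: "A \<in> sets lebesgue" "B \<in> sets lebesgue" "\<And>i. i \<in> I \<Longrightarrow> Bs i \<in> sets lebesgue"
    and cover: "AE x in lebesgue. indicator B x = (\<Sum>\<^sub>\<infinity>i\<in>I. indicator (Bs i) x :: ennreal)"
  shows "interaction s A B w = (\<Sum>\<^sub>\<infinity>i\<in>I. interaction s A (Bs i) w)"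
proof -
  have inner: "(\<integral>\<^sup>+x. indicator A y * indicator B x * rkern s (x - y + w) \<partial>lebesgue)
      = (\<Sum>\<^sub>\<infinity>i\<in>I. \<integral>\<^sup>+x. indicator A y * indicator (Bs i) x * rkern s (x - y + w) \<partial>lebesgue)" for y
  proof -
    have "(\<integral>\<^sup>+x. indicator A y * indicator B x * rkern s (x - y + w) \<partial>lebesgue)
        = (\<integral>\<^sup>+x. (\<Sum>\<^sub>\<infinity>i\<in>I. indicator A y * indicator (Bs i) x * rkern s (x - y + w)) \<partial>lebesgue)"
    proof (rule nn_integral_cong_AE)
      show "AE x in lebesgue. indicator A y * indicator B x * rkern s (x - y + w)
          = (\<Sum>\<^sub>\<infinity>i\<in>I. indicator A y * indicator (Bs i) x * rkern s (x - y + w))"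
        using cover
      proof eventually_elim
        case (elim x)
        have "(\<Sum>\<^sub>\<infinity>i\<in>I. indicator A y * indicator (Bs i) x * rkern s (x - y + w))
            = (indicator A y * rkern s (x - y + w)) * (\<Sum>\<^sub>\<infinity>i\<in>I. indicator (Bs i) x)"
          by (subst infsum_cmult_ennreal[symmetric]) (simp add: ac_simps)
        then show ?case by (simp add: elim ac_simps)
      qed
    qed
    also have "\<dots> = (\<Sum>\<^sub>\<infinity>i\<in>I. \<integral>\<^sup>+x. indicator A y * indicator (Bs i) x * rkern s (x - y + w) \<partial>lebesgue)"
      by (rule nn_integral_infsum) measurable
    finally show ?thesis .
  qed
  show ?thesis
    unfolding interaction_def inner by (rule nn_integral_infsum) measurable
qed

lemma interaction_le_measure_mult:
  assumes [measurable]: "A \<in> sets lebesgue" "B \<in> sets lebesgue"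
    and bound: "\<And>x y. y \<in> A \<Longrightarrow> x \<in> B \<Longrightarrow> rkern s (x - y + w) \<le> c"
  shows "interaction s A B w \<le> c * emeasure lebesgue A * emeasure lebesgue B"
proof -
  have "interaction s A B w \<le> (\<integral>\<^sup>+y. \<integral>\<^sup>+x. (c * indicator A y) * indicator B x \<partial>lebesgue \<partial>lebesgue)"
    unfolding interaction_def by (intro nn_integral_mono) (auto simp: indicator_def bound)
  also have "\<dots> = (\<integral>\<^sup>+y. (c * indicator A y) * emeasure lebesgue B \<partial>lebesgue)"
    by (intro nn_integral_cong nn_integral_cmult_indicator) simp
  also have "\<dots> = (\<integral>\<^sup>+y. (c * emeasure lebesgue B) * indicator A y \<partial>lebesgue)"
    by (simp only: ac_simps)
  also have "\<dots> = c * emeasure lebesgue B * emeasure lebesgue A"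
    by (rule nn_integral_cmult_indicator) simp
  finally show ?thesis by (simp only: ac_simps)
qed

lemma sets_lebesgue_slab[measurable]: "{x::real \<times> 'm::euclidean_space. fst x \<in> {a..b}} \<in> sets lebesgue"
proof -
  have "closed {x::real \<times> 'm. a \<le> fst x \<and> fst x \<le> b}"
    by (intro closed_Collect_conj closed_Collect_le continuous_intros)
  then show ?thesis by simp
qed

lemma sets_lebesgue_strip[measurable]: "strip \<in> sets lebesgue"
  unfolding strip_def by (rule sets_lebesgue_slab)

lemma fst_e1[simp]: "fst e1 = 1"
  by (simp add: e1_def)

lemma strip_translate:
  "(\<lambda>x. x + of_int k *\<^sub>R e1) ` strip = {x::real \<times> 'm::euclidean_space. fst x \<in> {of_int k - 1/2 .. of_int k + 1/2}}"
proof (intro set_eqI iffI)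
  fix x :: "real \<times> 'm"
  assume "x \<in> {x. fst x \<in> {of_int k - 1/2 .. of_int k + 1/2}}"
  then have "x - of_int k *\<^sub>R e1 \<in> strip" by (simp add: strip_def)
  then show "x \<in> (\<lambda>x. x + of_int k *\<^sub>R e1) ` strip" by (rule rev_image_eqI) simp
qed (auto simp: strip_def)

lemma AE_translated_strip_iff:
  "AE x in lebesgue. \<forall>k::int.
     x \<in> (\<lambda>p. p + of_int k *\<^sub>R e1) ` (strip :: (real \<times> 'm::euclidean_space) set) \<longleftrightarrow> k = \<lfloor>fst x + 1/2\<rfloor>"
proof -
  have "{x::real \<times> 'm. fst x = c} \<in> null_sets lebesgue" for c
  proof -
    have "negligible {x::real \<times> 'm. (1, 0) \<bullet> x = c}"
      by (rule negligible_hyperplane) (simp add: zero_prod_def)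
    moreover have "{x::real \<times> 'm. (1, 0) \<bullet> x = c} = {x. fst x = c}"
      by (auto simp: inner_Pair_0)
    ultimately show ?thesis by (simp add: negligible_iff_null_sets)
  qed
  then have "AE x in lebesgue. \<forall>j::int. fst (x :: real \<times> 'm) \<noteq> of_int j + 1/2"
    by (intro AE_I'[where N = "\<Union>j::int. {x. fst x = of_int j + 1/2}"] null_sets_UN') auto
  then show ?thesis
  proof eventually_elim
    case (elim x)
    show ?case
    proof
      fix k :: int
      have "fst x \<noteq> of_int k + 1/2" using elim by blast
      then have "of_int k - 1/2 \<le> fst x \<and> fst x \<le> of_int k + 1/2 \<longleftrightarrow>
          of_int k \<le> fst x + 1/2 \<and> fst x + 1/2 < of_int k + 1"
        by linarith
      then show "x \<in> (\<lambda>p. p + of_int k *\<^sub>R e1) ` strip \<longleftrightarrow> k = \<lfloor>fst x + 1/2\<rfloor>"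
        unfolding strip_translate by (simp add: eq_commute[of k] floor_eq_iff)
    qed
  qed
qed

lemma indicator_compl_strip_AE:
  "AE x in lebesgue. indicator (- strip) x =
     (\<Sum>\<^sub>\<infinity>k\<in>UNIV - {0}. indicator ((\<lambda>p. p + of_int k *\<^sub>R e1) ` strip) (x :: real \<times> 'm::euclidean_space) :: ennreal)"
  using AE_translated_strip_iff
proof eventually_elim
  case (elim x)
  define k0 where "k0 = \<lfloor>fst x + 1/2\<rfloor>"
  have "x \<in> strip \<longleftrightarrow> k0 = 0"
    using elim[rule_format, of 0] by (simp add: k0_def)
  moreover have "(\<Sum>\<^sub>\<infinity>k\<in>UNIV - {0}. indicator ((\<lambda>p. p + of_int k *\<^sub>R e1) ` strip) x :: ennreal)
      = (\<Sum>\<^sub>\<infinity>k\<in>(UNIV - {0}) \<inter> {k0}. 1)"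
    by (rule infsum_cong_neutral) (auto simp: indicator_def elim k0_def)
  moreover have "(UNIV - {0}) \<inter> {k0} = (if k0 = 0 then {} else {k0})"
    by auto
  ultimately show ?case
    by (simp add: indicator_def)
qed

lemma abs_fst_translate_ge:
  assumes "x \<in> strip" "y \<in> strip"
  shows "\<bar>of_int k\<bar> - 1 \<le> \<bar>fst (x - y + of_int k *\<^sub>R e1)\<bar>"
proof -
  have "\<bar>fst x\<bar> \<le> 1/2" "\<bar>fst y\<bar> \<le> 1/2"
    using assms by (auto simp: strip_def)
  then show ?thesis by simp
qed

lemma P_S_eq_infsum_interaction:
  assumes [measurable]: "F \<in> sets lebesgue" and "F \<subseteq> strip"
  shows "P_S s F = (\<Sum>\<^sub>\<infinity>k\<in>UNIV. interaction s F (strip - F) (of_int k *\<^sub>R e1))"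
proof -
  have "P_S s F = (\<integral>\<^sup>+y. \<integral>\<^sup>+x. (\<Sum>\<^sub>\<infinity>k\<in>UNIV.
      indicator F y * indicator (strip - F) x * rkern s (x - y + of_int k *\<^sub>R e1)) \<partial>lebesgue \<partial>lebesgue)"
    using assms(2) by (simp add: P_S_def perK_def infsum_cmult_ennreal Int_absorb2)
  also have "\<dots> = (\<integral>\<^sup>+y. (\<Sum>\<^sub>\<infinity>k\<in>UNIV. \<integral>\<^sup>+x.
      indicator F y * indicator (strip - F) x * rkern s (x - y + of_int k *\<^sub>R e1) \<partial>lebesgue) \<partial>lebesgue)"
    by (intro nn_integral_cong nn_integral_infsum) measurable
  also have "\<dots> = (\<Sum>\<^sub>\<infinity>k\<in>UNIV. interaction s F (strip - F) (of_int k *\<^sub>R e1))"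
    unfolding interaction_def by (rule nn_integral_infsum) measurable
  finally show ?thesis .
qed

lemma frac_per_eq_P_S_add_translates:
  fixes F :: "(real \<times> 'm::euclidean_space) set"
  assumes [measurable]: "F \<in> sets lebesgue" and F: "F \<subseteq> strip"
  shows "frac_per s F = P_S s F + (\<Sum>\<^sub>\<infinity>k\<in>UNIV - {0}. interaction s F F (of_int k *\<^sub>R e1))"
proof -
  let ?w = "\<lambda>k::int. of_int k *\<^sub>R (e1 :: real \<times> 'm)"
  have compl_strip: "- strip \<in> sets (lebesgue :: (real \<times> 'm) measure)"
    using sets.compl_sets[of strip lebesgue] by (simp add: Compl_eq_Diff_UNIV)
  have far: "interaction s F (- strip) 0 = (\<Sum>\<^sub>\<infinity>k\<in>UNIV - {0}. interaction s F strip (?w k))"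
  proof -
    have "interaction s F (- strip) 0 = (\<Sum>\<^sub>\<infinity>k\<in>UNIV - {0}. interaction s F ((\<lambda>p. p + ?w k) ` strip) 0)"
      by (intro interaction_infsum_AE[OF _ _ _ indicator_compl_strip_AE] sets_lebesgue_translate compl_strip) simp_all
    then show ?thesis
      by (simp add: interaction_translate[of F strip])
  qed
  have "frac_per s F = interaction s F (strip - F) 0 + interaction s F (- strip) 0"
  proof -
    have "- F = (strip - F) \<union> - strip" using F by auto
    then show ?thesis
      unfolding frac_per_eq_interaction by (simp only:) (rule interaction_Un; use compl_strip in auto)
  qed
  also have "\<dots> = interaction s F (strip - F) 0 + (\<Sum>\<^sub>\<infinity>k\<in>UNIV - {0}.
      interaction s F (strip - F) (?w k) + interaction s F F (?w k))"
  proof -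
    have "strip = (strip - F) \<union> F" using F by auto
    then have "interaction s F strip w = interaction s F (strip - F) w + interaction s F F w" for w
      by (metis interaction_Un Diff_disjoint Int_commute assms(1) sets.Diff sets_lebesgue_strip)
    then show ?thesis by (simp add: far)
  qed
  also have "\<dots> = P_S s F + (\<Sum>\<^sub>\<infinity>k\<in>UNIV - {0}. interaction s F F (?w k))"
  proof -
    have "(\<Sum>\<^sub>\<infinity>k\<in>UNIV. g k) = g 0 + (\<Sum>\<^sub>\<infinity>k\<in>UNIV - {0}. g k)" for g :: "int \<Rightarrow> ennreal"
      using infsum_insert[of g "UNIV - {0}" 0] by (simp add: nonneg_summable_on_complete insert_absorb)
    then show ?thesis
      by (simp add: P_S_eq_infsum_interaction[OF _ F] infsum_add nonneg_summable_on_complete add.assoc)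
  qed
  finally show ?thesis .
qed

lemma interaction_translate_far_le:
  fixes F :: "(real \<times> 'm::euclidean_space) set"
  assumes "0 \<le> s" "F \<in> sets lebesgue" "F \<subseteq> strip" "1 < \<bar>k\<bar>"
  shows "interaction s F F (of_int k *\<^sub>R e1)
    \<le> ennreal ((\<bar>of_int k\<bar> - 1) powr - (real DIM(real \<times> 'm) + s)) * (emeasure lebesgue F)\<^sup>2"
proof -
  have "interaction s F F (of_int k *\<^sub>R e1)
      \<le> ennreal ((\<bar>of_int k\<bar> - 1) powr - (real DIM(real \<times> 'm) + s)) * emeasure lebesgue F * emeasure lebesgue F"
  proof (rule interaction_le_measure_mult)
    fix x y assume "y \<in> F" "x \<in> F"
    then show "rkern s (x - y + of_int k *\<^sub>R e1) \<le> ennreal ((\<bar>of_int k\<bar> - 1) powr - (real DIM(real \<times> 'm) + s))"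
      using assms by (intro rkern_le_powr_fst abs_fst_translate_ge) auto
  qed (use assms in simp_all)
  then show ?thesis by (simp add: power2_eq_square mult.assoc)
qed

lemma interaction_e1_le:
  fixes F :: "(real \<times> 'm::euclidean_space) set"
  assumes "0 \<le> s" and [measurable]: "F \<in> sets lebesgue" and F: "F \<subseteq> strip"
  shows "interaction s F F e1
    \<le> Pi_S s F + ennreal ((1/4) powr - (real DIM(real \<times> 'm) + s)) * (emeasure lebesgue F)\<^sup>2"
proof -
  define c where "c = ennreal ((1/4) powr - (real DIM(real \<times> 'm) + s))"
  define Ft where "Ft = F \<inter> {x. fst x \<in> {1/4..1/2}}"
  define G where "G = F \<inter> {x. fst x \<in> {-1/2..-1/4}}"
  have [measurable]: "Ft \<in> sets lebesgue" "G \<in> sets lebesgue"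
    unfolding Ft_def G_def by measurable
  have near: "rkern s (x - y + e1) \<le> c" if "y \<in> F" "x \<in> F" "y \<notin> Ft \<or> x \<notin> G" for x y
  proof -
    have "1/4 \<le> \<bar>fst (x - y + e1)\<bar>"
      using that F by (auto simp: strip_def Ft_def G_def)
    then show ?thesis unfolding c_def using assms(1) by (intro rkern_le_powr_fst) auto
  qed
  have sub: "G \<subseteq> F" "Ft \<subseteq> F"
    by (auto simp: G_def Ft_def)
  have "interaction s F F e1 = interaction s F G e1 + interaction s F (F - G) e1"
    using interaction_Un[of F G "F - G" s e1] sub by (simp add: Un_absorb1)
  also have "interaction s F G e1 = interaction s Ft G e1 + interaction s (F - Ft) G e1"
    using interaction_Un_left[of Ft G "F - Ft" s e1] sub by (simp add: Un_absorb1)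
  also have "interaction s Ft G e1 = Pi_S s F"
  proof -
    have "(\<lambda>p. p + e1) ` F \<inter> {x. fst x \<in> {1/2..3/4}} = (\<lambda>x. x + e1) ` G"
      by (force simp: G_def image_iff)
    then have "Pi_S s F = interaction s Ft ((\<lambda>x. x + e1) ` G) 0"
      unfolding Pi_S_def Let_def interaction_def Ft_def[symmetric] by simp
    then show ?thesis
      by (simp add: interaction_translate[of Ft G])
  qed
  also have "interaction s (F - Ft) G e1 \<le> c * emeasure lebesgue F * emeasure lebesgue G"
  proof -
    have "interaction s (F - Ft) G e1 \<le> c * emeasure lebesgue (F - Ft) * emeasure lebesgue G"
    proof (rule interaction_le_measure_mult)
      fix x y assume "y \<in> F - Ft" "x \<in> G"
      then show "rkern s (x - y + e1) \<le> c" by (intro near) (auto simp: G_def)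
    qed simp_all
    also have "\<dots> \<le> c * emeasure lebesgue F * emeasure lebesgue G"
      by (intro mult_right_mono mult_left_mono emeasure_mono) auto
    finally show ?thesis .
  qed
  also have "interaction s F (F - G) e1 \<le> c * emeasure lebesgue F * emeasure lebesgue (F - G)"
    by (rule interaction_le_measure_mult) (auto intro: near)
  also have "Pi_S s F + c * emeasure lebesgue F * emeasure lebesgue G
      + c * emeasure lebesgue F * emeasure lebesgue (F - G) = Pi_S s F + c * (emeasure lebesgue F)\<^sup>2"
  proof -
    have "emeasure lebesgue G + emeasure lebesgue (F - G) = emeasure lebesgue F"
      using plus_emeasure[of G lebesgue "F - G"] sub by (simp add: Un_absorb1)
    then show ?thesis
      by (simp add: add.assoc distrib_left[symmetric] power2_eq_square mult.assoc)
  qed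
  finally show ?thesis
    by (simp add: c_def add_mono)
qed

lemma summable_powr_dim:
  assumes "0 \<le> s"
  shows "summable (\<lambda>n. real n powr - (real DIM(real \<times> 'm::euclidean_space) + s))"
proof -
  have "2 \<le> real DIM(real \<times> 'm)"
    using DIM_positive[where 'a = 'm] by simp
  then show ?thesis
    unfolding summable_real_powr_iff using assms by linarith
qed

lemma infsum_translates_le:
  fixes s :: real and F :: "(real \<times> 'm::euclidean_space) set"
  defines "p \<equiv> real DIM(real \<times> 'm) + s"
  assumes s: "0 \<le> s" and [measurable]: "F \<in> sets lebesgue" and F: "F \<subseteq> strip"
  shows "(\<Sum>\<^sub>\<infinity>k\<in>UNIV - {0}. interaction s F F (of_int k *\<^sub>R e1))
    \<le> 2 * (Pi_S s F + ennreal ((1/4) powr - p + (\<Sum>n. real n powr - p)) * (emeasure lebesgue F)\<^sup>2)"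
proof -
  define \<mu> where "\<mu> = (emeasure lebesgue F)\<^sup>2"
  define A where "A = Pi_S s F + ennreal ((1/4) powr - p) * \<mu>"
  have summable: "summable (\<lambda>n. real n powr - p)"
    unfolding p_def using s by (rule summable_powr_dim)
  have termwise: "interaction s F F (of_int (int (Suc n)) *\<^sub>R e1)
      \<le> (if n = 0 then A else 0) + ennreal (real n powr - p) * \<mu>" for n
  proof (cases "n = 0")
    case True
    have "interaction s F F e1 \<le> A"
      unfolding A_def \<mu>_def p_def by (rule interaction_e1_le[OF s \<open>F \<in> sets lebesgue\<close> F])
    with True show ?thesis by simp
  next
    case False
    have "interaction s F F (of_int (int (Suc n)) *\<^sub>R e1) \<le> ennreal (real n powr - p) * \<mu>"
      using interaction_translate_far_le[OF s \<open>F \<in> sets lebesgue\<close> F, of "int (Suc n)"] False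
      unfolding \<mu>_def p_def by simp
    with False show ?thesis by simp
  qed
  have "(\<Sum>\<^sub>\<infinity>k\<in>UNIV - {0}. interaction s F F (of_int k *\<^sub>R e1))
      = 2 * (\<Sum>n. interaction s F F (of_int (int (Suc n)) *\<^sub>R e1))"
    by (rule infsum_int_nonzero_symmetric) (subst interaction_swap; simp)
  also have "(\<Sum>n. interaction s F F (of_int (int (Suc n)) *\<^sub>R e1))
      \<le> (\<Sum>n. (if n = 0 then A else 0) + ennreal (real n powr - p) * \<mu>)"
    by (intro suminf_le summableI termwise)
  also have "\<dots> = A + ennreal (\<Sum>n. real n powr - p) * \<mu>"
    using sums_unique[OF sums_single[of 0 "\<lambda>_. A"]] summable
    by (simp add: suminf_add[symmetric] suminf_ennreal2)
  also have "\<dots> = Pi_S s F + ennreal ((1/4) powr - p + (\<Sum>n. real n powr - p)) * \<mu>"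
    using suminf_nonneg[OF summable] by (simp add: A_def ennreal_plus distrib_right add.assoc)
  finally show ?thesis
    by (simp add: \<mu>_def mult_left_mono)
qed

lemma ennreal_double_le:
  fixes P M :: ennreal
  assumes "0 \<le> a"
  shows "2 * (P + ennreal a * M) \<le> ennreal (2 * (1 + a)) * (M + P)"
proof -
  have "ennreal (2 * (1 + a)) * (M + P) = 2 * (P + ennreal a * M) + 2 * (M + ennreal a * P)"
    using assms by (simp add: ennreal_mult' ennreal_plus algebra_simps)
  then show ?thesis
    by (simp add: le_iff_add)
qed

theorem proposition3p1:
  fixes s :: real
  assumes "0 < s" and "s < 1"
  shows "(\<forall>F :: (real \<times> 'm::euclidean_space) set.
            F \<in> sets lebesgue \<and> F \<subseteq> strip \<longrightarrow>
              P_S s F \<le> frac_per s F \<and>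
              frac_per s F = P_S s F +
                (\<Sum>\<^sub>\<infinity>k\<in>(UNIV::int set) - {0}.
                   \<integral>\<^sup>+ y. \<integral>\<^sup>+ x. indicator F y * indicator F x * rkern s (x - y + of_int k *\<^sub>R e1)
                     \<partial>lebesgue \<partial>lebesgue))
       \<and> (\<exists>C :: real. C > 0 \<and>
            (\<forall>F :: (real \<times> 'm) set. F \<in> sets lebesgue \<and> F \<subseteq> strip \<longrightarrow>
               frac_per s F \<le> P_S s F + ennreal C * ((emeasure lebesgue F)\<^sup>2 + Pi_S s F)))"
  \<comment> \<open>The argument only uses \<open>0 \<le> s\<close>.\<close>
proof (intro conjI allI impI)
  fix F :: "(real \<times> 'm) set"
  assume "F \<in> sets lebesgue \<and> F \<subseteq> strip"
  then have eq: "frac_per s F = P_S s F + (\<Sum>\<^sub>\<infinity>k\<in>UNIV - {0}. interaction s F F (of_int k *\<^sub>R e1))"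
    by (intro frac_per_eq_P_S_add_translates) auto
  then show "frac_per s F = P_S s F + (\<Sum>\<^sub>\<infinity>k\<in>UNIV - {0}.
      \<integral>\<^sup>+ y. \<integral>\<^sup>+ x. indicator F y * indicator F x * rkern s (x - y + of_int k *\<^sub>R e1) \<partial>lebesgue \<partial>lebesgue)"
    by (simp only: interaction_def)
  from eq show "P_S s F \<le> frac_per s F"
    by (simp add: le_iff_add)
next
  define p where "p = real DIM(real \<times> 'm) + s"
  define a where "a = (1/4) powr - p + (\<Sum>n. real n powr - p)"
  have "0 \<le> (\<Sum>n. real n powr - p)"
    unfolding p_def using summable_powr_dim[where 'm = 'm] assms(1) by (intro suminf_nonneg) simp_all
  then have "0 \<le> a"
    unfolding a_def by simp
  show "\<exists>C. C > 0 \<and> (\<forall>F :: (real \<times> 'm) set. F \<in> sets lebesgue \<and> F \<subseteq> strip \<longrightarrow>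
      frac_per s F \<le> P_S s F + ennreal C * ((emeasure lebesgue F)\<^sup>2 + Pi_S s F))"
  proof (intro exI[of _ "2 * (1 + a)"] conjI allI impI)
    show "0 < 2 * (1 + a)" using \<open>0 \<le> a\<close> by simp
    fix F :: "(real \<times> 'm) set"
    assume F: "F \<in> sets lebesgue \<and> F \<subseteq> strip"
    then have "frac_per s F = P_S s F + (\<Sum>\<^sub>\<infinity>k\<in>UNIV - {0}. interaction s F F (of_int k *\<^sub>R e1))"
      by (intro frac_per_eq_P_S_add_translates) auto
    also have "\<dots> \<le> P_S s F + 2 * (Pi_S s F + ennreal a * (emeasure lebesgue F)\<^sup>2)"
      using F assms(1) unfolding a_def p_def by (intro add_left_mono infsum_translates_le) auto
    also have "\<dots> \<le> P_S s F + ennreal (2 * (1 + a)) * ((emeasure lebesgue F)\<^sup>2 + Pi_S s F)"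
      using \<open>0 \<le> a\<close> by (intro add_left_mono ennreal_double_le)
    finally show "frac_per s F \<le> P_S s F + ennreal (2 * (1 + a)) * ((emeasure lebesgue F)\<^sup>2 + Pi_S s F)" .
  qed
qed

end
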